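(* Let $I \subseteq A = \mathbbm{k}[X_1,\dots,X_r]$ be a monomial ideal and let $\mathbf{a} \in \mathbb{N}^r$. Let $p, q \in \mathbb{N}$ with $q \neq 0$. Then $x^{\mathbf{a}} \in I_{p/q}$ if and only if $\nu^*_{\mathbf{a}}(I) \ge \frac{p}{q}$.
   Context: $\mathbbm{k}$ is a field. For an ideal $I$ in a domain $A$ and a positive rational $u = p/q$ ($p,q\in\mathbb{N}$, $q\neq 0$), the $u$-th rational power is $I_u = \{x \in A : x^q \in \overline{I^p}\}$, where $\overline{\,\cdot\,}$ denotes integral closure; this does not depend on the representation of $u$. For a monomial ideal $I$ with minimal monomial generators whose exponent vectors form the columns of the $r\times m$ matrix $M$ (the exponent matrix of $I$), and $\mathbf{a}\in\mathbb{N}^r$, $\nu^*_{\mathbf{a}}(I)$ denotes the optimal value of the linear program: maximize $\mathbf{1}^m\cdot \mathbf{y}$ subject to $M\mathbf{y} \le \mathbf{a}$, $\mathbf{y}\in\mathbb{R}^m_{\ge 0}$ (equivalently, by LP duality, the minimum of $\mathbf{a}\cdot\mathbf{z}$ subject to $M^T\mathbf{z}\ge \mathbf{1}^m$, $\mathbf{z}\in\mathbb{R}^r_{\ge0}$). $x^{\mathbf a}$ denotes the monomial with exponent vector $\mathbf a$. *)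

theory Defs
  imports "HOL-Library.Poly_Mapping" "HOL-Library.Extended_Real" Complex_Main
begin

text \<open>Polynomial ring over index type n (finite, r = CARD n) is
  the poly_mapping type from monomial exponent vectors to coefficients.\<close>

definition is_ideal :: "'r::comm_ring_1 set \<Rightarrow> bool" where
  "is_ideal I \<longleftrightarrow> 0 \<in> I \<and> (\<forall>x\<in>I. \<forall>y\<in>I. x + y \<in> I) \<and> (\<forall>a x. x \<in> I \<longrightarrow> a * x \<in> I)"

definition ideal_gen :: "'r::comm_ring_1 set \<Rightarrow> 'r set" where
  "ideal_gen S = \<Inter>{J. is_ideal J \<and> S \<subseteq> J}"

fun ideal_pow :: "'r::comm_ring_1 set \<Rightarrow> nat \<Rightarrow> 'r set" where
  "ideal_pow I 0 = UNIV"
| "ideal_pow I (Suc n) = ideal_gen {x * y | x y. x \<in> I \<and> y \<in> ideal_pow I n}"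

definition int_closure :: "'r::comm_ring_1 set \<Rightarrow> 'r set" where
  "int_closure J = {x. \<exists>n\<ge>1. \<exists>c::nat \<Rightarrow> 'r. (\<forall>i\<in>{1..n}. c i \<in> ideal_pow J i) \<and>
                        x ^ n + (\<Sum>i=1..n. c i * x ^ (n - i)) = 0}"

definition rat_power :: "'r::comm_ring_1 set \<Rightarrow> nat \<Rightarrow> nat \<Rightarrow> 'r set" where
  "rat_power I p q = {x. x ^ q \<in> int_closure (ideal_pow I p)}"

definition monom_x :: "('n \<Rightarrow>\<^sub>0 nat) \<Rightarrow> (('n \<Rightarrow>\<^sub>0 nat) \<Rightarrow>\<^sub>0 'k::comm_ring_1)" where
  "monom_x a = Poly_Mapping.single a 1"

definition monomial_ideal :: "(('n \<Rightarrow>\<^sub>0 nat) \<Rightarrow>\<^sub>0 'k::comm_ring_1) set \<Rightarrow> bool" where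
  "monomial_ideal I \<longleftrightarrow> (\<exists>S. I = ideal_gen (monom_x ` S))"

definition min_gens :: "(('n \<Rightarrow>\<^sub>0 nat) \<Rightarrow>\<^sub>0 'k::comm_ring_1) set \<Rightarrow> ('n \<Rightarrow>\<^sub>0 nat) set" where
  "min_gens I = {g. monom_x g \<in> I \<and>
      (\<forall>b. monom_x b \<in> I \<and> (\<forall>i. Poly_Mapping.lookup b i \<le> Poly_Mapping.lookup g i) \<longrightarrow> b = g)}"

definition nu_star :: "('n \<Rightarrow>\<^sub>0 nat) \<Rightarrow> (('n \<Rightarrow>\<^sub>0 nat) \<Rightarrow>\<^sub>0 'k::comm_ring_1) set \<Rightarrow> ereal" where
  "nu_star a I = (SUP y \<in> {y :: ('n \<Rightarrow>\<^sub>0 nat) \<Rightarrow> real.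
        (\<forall>g\<in>min_gens I. y g \<ge> 0) \<and>
        (\<forall>i. (\<Sum>g\<in>min_gens I. real (Poly_Mapping.lookup g i) * y g) \<le> real (Poly_Mapping.lookup a i))}.
      ereal (\<Sum>g\<in>min_gens I. y g))"

end

theory Submission
  imports Defs
begin

(*
  For a weight w \<ge> 0 on the variables, the polynomials all of whose monomials have
  w-weight at least t form an ideal, and these ideals multiply like t.  If every minimal generator
  of I has weight \<ge> 1, then I^p lies in the weight \<ge> p ideal, and an equation of integral
  dependence of (x^a)^q over I^p forces q w(a) \<ge> p.  Conversely, a rational feasible point y of
  the linear program with \<Sum>y \<ge> p/q becomes, after clearing denominators, a product of p D
  generators dividing x^(q D a), so (x^(q a))^D \<in> (I^p)^D.  The two weight conditions are the
  dual and primal programs, and LP duality, together with the existence of rational optimal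
  points, follows from Fourier-Motzkin elimination.
*)

section \<open>Fourier-Motzkin elimination\<close>

text \<open>An inequality \<open>(c, b)\<close> stands for \<open>\<Sum>v\<in>X. c v * x v \<le> b\<close>, where \<open>X\<close> is the
  set of variables under consideration; coefficients outside \<open>X\<close> are ignored.\<close>

type_synonym 'v ineq = "('v \<Rightarrow> real) \<times> real"

definition slack :: "'v set \<Rightarrow> ('v \<Rightarrow> real) \<Rightarrow> 'v ineq \<Rightarrow> real" where
  "slack X x s = snd s - (\<Sum>v\<in>X. fst s v * x v)"

definition satisfies :: "'v set \<Rightarrow> ('v \<Rightarrow> real) \<Rightarrow> 'v ineq \<Rightarrow> bool" where
  "satisfies X x s \<longleftrightarrow> 0 \<le> slack X x s"

definition rational_ineq :: "'v ineq \<Rightarrow> bool" where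
  "rational_ineq s \<longleftrightarrow> (\<forall>v. fst s v \<in> \<rat>) \<and> snd s \<in> \<rat>"

definition combine :: "'v \<Rightarrow> 'v ineq \<Rightarrow> 'v ineq \<Rightarrow> 'v ineq" where
  "combine v s t = (\<lambda>u. fst s u / fst s v - fst t u / fst t v, snd s / fst s v - snd t / fst t v)"

definition eliminate :: "'v \<Rightarrow> 'v ineq set \<Rightarrow> 'v ineq set" where
  "eliminate v S = {s\<in>S. fst s v = 0} \<union>
     {combine v s t | s t. s \<in> S \<and> t \<in> S \<and> fst s v > 0 \<and> fst t v < 0}"

definition ineq_comb :: "('v ineq \<Rightarrow> real) \<Rightarrow> 'v ineq set \<Rightarrow> 'v ineq" where
  "ineq_comb l S = ((\<lambda>v. \<Sum>s\<in>S. l s * fst s v), (\<Sum>s\<in>S. l s * snd s))"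

definition ineq_cone :: "'v ineq set \<Rightarrow> 'v ineq set" where
  "ineq_cone S = {ineq_comb l S | l. \<forall>s\<in>S. 0 \<le> l s}"

lemma slack_insert:
  assumes "finite X" "v \<notin> X"
  shows "slack (insert v X) (x(v := t)) s = slack X x s - fst s v * t"
proof -
  have "(\<Sum>u\<in>X. fst s u * (x(v := t)) u) = (\<Sum>u\<in>X. fst s u * x u)"
    using assms(2) by (intro sum.cong) auto
  then show ?thesis
    using assms by (simp add: slack_def)
qed

lemma slack_combine:
  "slack X x (combine v s t) = slack X x s / fst s v - slack X x t / fst t v"
  unfolding slack_def combine_def
  by (simp add: sum_subtractf sum_divide_distrib left_diff_distrib diff_divide_distrib)

lemma rational_slack:
  "rational_ineq s \<Longrightarrow> \<forall>v\<in>X. x v \<in> \<rat> \<Longrightarrow> slack X x s \<in> \<rat>"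
  unfolding slack_def rational_ineq_def by (intro Rats_diff Rats_sum Rats_mult) auto

lemma eliminateE:
  assumes "r \<in> eliminate v S"
  obtains "r \<in> S" "fst r v = 0"
  | s t where "s \<in> S" "t \<in> S" "fst s v > 0" "fst t v < 0" "r = combine v s t"
  using assms unfolding eliminate_def by blast

lemma rational_combine:
  "rational_ineq s \<Longrightarrow> rational_ineq t \<Longrightarrow> rational_ineq (combine v s t)"
  by (simp add: rational_ineq_def combine_def Rats_diff Rats_divide)

lemma rational_eliminate:
  "\<forall>s\<in>S. rational_ineq s \<Longrightarrow> \<forall>s\<in>eliminate v S. rational_ineq s"
  by (metis eliminateE rational_combine)

lemma finite_eliminate: "finite S \<Longrightarrow> finite (eliminate v S)"
proof -
  assume "finite S"
  have "eliminate v S \<subseteq> S \<union> (\<lambda>(s, t). combine v s t) ` (S \<times> S)"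
    unfolding eliminate_def by auto
  then show ?thesis
    using \<open>finite S\<close> by (meson finite_SigmaI finite_UnI finite_imageI finite_subset)
qed

lemma eliminate_vanishing:
  assumes "\<forall>s\<in>S. \<forall>u. u \<notin> insert v X \<longrightarrow> fst s u = 0"
  shows "\<forall>s\<in>eliminate v S. \<forall>u. u \<notin> X \<longrightarrow> fst s u = 0"
proof (intro ballI allI impI)
  fix r u assume "r \<in> eliminate v S" "u \<notin> X"
  then show "fst r u = 0"
  proof (cases rule: eliminateE)
    case (2 s t)
    then show ?thesis
      using assms \<open>u \<notin> X\<close> by (cases "u = v") (auto simp: combine_def)
  qed (use assms \<open>u \<notin> X\<close> in \<open>cases "u = v"; auto\<close>)
qed

lemma separating_point:
  fixes Lo Up :: "real set"
  assumes "finite Lo" "finite Up" "\<forall>l\<in>Lo. \<forall>u\<in>Up. l \<le> u"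
  obtains t where "\<forall>l\<in>Lo. l \<le> t" "\<forall>u\<in>Up. t \<le> u" "Lo \<union> Up \<subseteq> \<rat> \<Longrightarrow> t \<in> \<rat>"
proof (cases "Lo = {}")
  case True
  show ?thesis
  proof (cases "Up = {}")
    case False
    have "Min Up \<in> Up"
      using assms(2) False by (rule Min_in)
    moreover have "\<forall>u\<in>Up. Min Up \<le> u"
      using assms(2) by simp
    ultimately show ?thesis
      using that[of "Min Up"] True by blast
  qed (use that[of 0] True in auto)
next
  case False
  have "Max Lo \<le> u" if "u \<in> Up" for u
    using False assms that by auto
  moreover have "Max Lo \<in> Lo"
    using assms(1) False by (rule Max_in)
  moreover have "\<forall>l\<in>Lo. l \<le> Max Lo"
    using assms(1) by simp
  ultimately show ?thesis
    using that[of "Max Lo"] by blast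
qed

lemma satisfies_insert_iff:
  assumes "finite X" "v \<notin> X"
  shows "satisfies (insert v X) (x(v := c)) s \<longleftrightarrow> fst s v * c \<le> slack X x s"
  using assms by (simp add: satisfies_def slack_insert)

lemma eliminate_bounds_ordered:
  assumes "\<forall>r\<in>eliminate v S. satisfies X x r" "s \<in> S" "t \<in> S" "fst s v > 0" "fst t v < 0"
  shows "slack X x t / fst t v \<le> slack X x s / fst s v"
proof -
  have "combine v s t \<in> eliminate v S"
    using assms(2-5) unfolding eliminate_def by blast
  then have "satisfies X x (combine v s t)"
    using assms(1) by blast
  then show ?thesis
    by (simp add: satisfies_def slack_combine)
qed

lemma satisfies_between_bounds:
  assumes "\<forall>r\<in>eliminate v S. satisfies X x r" "s \<in> S"
    and lower: "\<forall>t\<in>S. fst t v < 0 \<longrightarrow> slack X x t / fst t v \<le> c"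
    and upper: "\<forall>t\<in>S. fst t v > 0 \<longrightarrow> c \<le> slack X x t / fst t v"
  shows "fst s v * c \<le> slack X x s"
proof -
  consider "fst s v = 0" | "fst s v > 0" | "fst s v < 0"
    by linarith
  then show ?thesis
  proof cases
    case 1
    then have "s \<in> eliminate v S"
      using assms(2) unfolding eliminate_def by blast
    then show ?thesis
      using assms(1) 1 by (simp add: satisfies_def)
  next
    case 2
    then show ?thesis
      using upper assms(2) by (simp add: pos_le_divide_eq mult.commute)
  next
    case 3
    then show ?thesis
      using lower assms(2) by (simp add: neg_divide_le_eq mult.commute)
  qed
qed

lemma extend_solution:
  assumes "finite X" "v \<notin> X" "finite S"
    and sol: "\<forall>s\<in>eliminate v S. satisfies X x s"
  obtains c where "\<forall>s\<in>S. satisfies (insert v X) (x(v := c)) s"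
    "\<forall>u\<in>X. x u \<in> \<rat> \<Longrightarrow> \<forall>s\<in>S. rational_ineq s \<Longrightarrow> c \<in> \<rat>"
proof -
  define bound where "bound s = slack X x s / fst s v" for s
  define P where "P = {s\<in>S. fst s v > 0}"
  define N where "N = {s\<in>S. fst s v < 0}"
  have "bound t \<le> bound s" if "s \<in> P" "t \<in> N" for s t
    using eliminate_bounds_ordered[OF sol, of s t] that by (simp add: bound_def P_def N_def)
  then have ordered: "\<forall>l\<in>bound ` N. \<forall>u\<in>bound ` P. l \<le> u"
    by blast
  have fin: "finite (bound ` N)" "finite (bound ` P)"
    using \<open>finite S\<close> by (simp_all add: N_def P_def)
  obtain c where c: "\<forall>l\<in>bound ` N. l \<le> c" "\<forall>u\<in>bound ` P. c \<le> u"
    and c_rat: "bound ` N \<union> bound ` P \<subseteq> \<rat> \<Longrightarrow> c \<in> \<rat>"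
    using separating_point[OF fin ordered] by metis
  have lower: "\<forall>t\<in>S. fst t v < 0 \<longrightarrow> slack X x t / fst t v \<le> c"
    using c(1) unfolding bound_def N_def by blast
  have upper: "\<forall>t\<in>S. fst t v > 0 \<longrightarrow> c \<le> slack X x t / fst t v"
    using c(2) unfolding bound_def P_def by blast
  have "fst s v * c \<le> slack X x s" if "s \<in> S" for s
    by (rule satisfies_between_bounds[OF sol that lower upper])
  then have "\<forall>s\<in>S. satisfies (insert v X) (x(v := c)) s"
    by (simp add: satisfies_insert_iff[OF assms(1,2)])
  moreover have "c \<in> \<rat>" if "\<forall>u\<in>X. x u \<in> \<rat>" "\<forall>s\<in>S. rational_ineq s"
  proof -
    have "bound s \<in> \<rat>" if "s \<in> S" for s
      unfolding bound_def using \<open>\<forall>s\<in>S. rational_ineq s\<close> \<open>\<forall>u\<in>X. x u \<in> \<rat>\<close> that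
      by (intro Rats_divide rational_slack) (auto simp: rational_ineq_def)
    then show ?thesis
      by (intro c_rat) (auto simp: N_def P_def)
  qed
  ultimately show ?thesis
    using that by blast
qed

lemma sum_mult_sum_swap:
  fixes m :: "'a \<Rightarrow> 'c::comm_semiring_0"
  shows "(\<Sum>t\<in>T. m t * (\<Sum>s\<in>S. L t s * f s)) = (\<Sum>s\<in>S. (\<Sum>t\<in>T. m t * L t s) * f s)"
proof -
  have "(\<Sum>t\<in>T. m t * (\<Sum>s\<in>S. L t s * f s)) = (\<Sum>t\<in>T. \<Sum>s\<in>S. m t * L t s * f s)"
    by (simp add: sum_distrib_left mult.assoc)
  also have "\<dots> = (\<Sum>s\<in>S. \<Sum>t\<in>T. m t * L t s * f s)"
    by (rule sum.swap)
  finally show ?thesis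
    by (simp add: sum_distrib_right)
qed

lemma ineq_comb_ineq_comb:
  assumes "\<And>t. t \<in> T \<Longrightarrow> t = ineq_comb (L t) S"
  shows "ineq_comb m T = ineq_comb (\<lambda>s. \<Sum>t\<in>T. m t * L t s) S"
proof -
  have "fst t v = (\<Sum>s\<in>S. L t s * fst s v)" "snd t = (\<Sum>s\<in>S. L t s * snd s)"
    if "t \<in> T" for t v
    by (subst (1) assms[OF that]; simp add: ineq_comb_def)+
  then show ?thesis
    by (simp add: ineq_comb_def sum_mult_sum_swap fun_eq_iff cong: sum.cong)
qed

lemma ineq_cone_self:
  assumes "finite S" "s \<in> S"
  shows "s \<in> ineq_cone S"
proof -
  have "(\<Sum>r\<in>S. (if r = s then 1 else 0) * f r) = f s" for f :: "'a ineq \<Rightarrow> real"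
    using assms by (simp add: if_distrib[of "\<lambda>c. c * _"] cong: if_cong)
  then have "ineq_comb (\<lambda>r. if r = s then 1 else 0) S = s"
    by (simp add: ineq_comb_def)
  then show ?thesis
    unfolding ineq_cone_def by (intro CollectI exI[of _ "\<lambda>r. if r = s then 1 else 0"]) simp
qed

lemma ineq_cone_trans:
  assumes "T \<subseteq> ineq_cone S"
  shows "ineq_cone T \<subseteq> ineq_cone S"
proof
  fix c assume "c \<in> ineq_cone T"
  then obtain m where m: "\<forall>t\<in>T. 0 \<le> m t" "c = ineq_comb m T"
    unfolding ineq_cone_def by blast
  have "\<forall>t\<in>T. \<exists>l. (\<forall>s\<in>S. 0 \<le> l s) \<and> t = ineq_comb l S"
    using assms unfolding ineq_cone_def by blast
  then obtain L where L: "\<forall>t\<in>T. (\<forall>s\<in>S. 0 \<le> L t s) \<and> t = ineq_comb (L t) S"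
    by (rule bchoice[THEN exE])
  have "c = ineq_comb (\<lambda>s. \<Sum>t\<in>T. m t * L t s) S"
    unfolding m(2) using L by (intro ineq_comb_ineq_comb) blast
  moreover have "0 \<le> (\<Sum>t\<in>T. m t * L t s)" if "s \<in> S" for s
  proof (intro sum_nonneg mult_nonneg_nonneg)
    fix t assume "t \<in> T"
    then show "0 \<le> m t" "0 \<le> L t s"
      using m(1) L that by blast+
  qed
  ultimately show "c \<in> ineq_cone S"
    unfolding ineq_cone_def by blast
qed

lemma sum_two_point:
  fixes f :: "'a \<Rightarrow> real"
  assumes "finite S" "s \<in> S" "t \<in> S" "s \<noteq> t"
  shows "(\<Sum>r\<in>S. (if r = s then \<alpha> else if r = t then \<beta> else 0) * f r) = \<alpha> * f s + \<beta> * f t"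
proof -
  have "(\<Sum>r\<in>S. (if r = s then \<alpha> else if r = t then \<beta> else 0) * f r)
      = (\<Sum>r\<in>S. (if r = s then \<alpha> * f r else 0)) + (\<Sum>r\<in>S. (if r = t then \<beta> * f r else 0))"
    unfolding sum.distrib[symmetric] using assms(4) by (intro sum.cong) auto
  then show ?thesis
    using assms by simp
qed

lemma combine_in_ineq_cone:
  assumes "finite S" "s \<in> S" "t \<in> S" "fst s v > 0" "fst t v < 0"
  shows "combine v s t \<in> ineq_cone S"
proof -
  define l where "l r = (if r = s then 1 / fst s v else if r = t then - 1 / fst t v else 0)" for r
  have "s \<noteq> t"
    using assms(4,5) by auto
  then have "ineq_comb l S = combine v s t"
    using assms(1-3) by (simp add: ineq_comb_def combine_def l_def sum_two_point fun_eq_iff)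
  moreover have "\<forall>r\<in>S. 0 \<le> l r"
    using assms(4,5) by (simp add: l_def)
  ultimately show ?thesis
    unfolding ineq_cone_def by (intro CollectI exI[of _ l]) simp
qed

lemma eliminate_subset_ineq_cone:
  "finite S \<Longrightarrow> eliminate v S \<subseteq> ineq_cone S"
  by (metis combine_in_ineq_cone eliminateE ineq_cone_self subsetI)

lemma certificate_without_variables:
  assumes "finite S" "\<forall>s\<in>S. \<forall>v. fst s v = 0" "\<not> (\<forall>s\<in>S. satisfies {} x s)"
  shows "\<exists>b<0. ((\<lambda>_. 0), b) \<in> ineq_cone S"
proof -
  have "\<exists>s\<in>S. snd s < 0"
    using assms(3) by (simp add: satisfies_def slack_def not_le)
  then obtain c b where "(c, b) \<in> S" "b < 0"
    by auto
  moreover from this have "c = (\<lambda>_. 0)"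
    using assms(2) by fastforce
  ultimately show ?thesis
    using ineq_cone_self[OF assms(1)] by blast
qed

theorem farkas_alternative:
  assumes "finite X" "finite S" "\<forall>s\<in>S. \<forall>v. v \<notin> X \<longrightarrow> fst s v = 0"
  shows "(\<exists>x. (\<forall>s\<in>S. satisfies X x s) \<and> ((\<forall>s\<in>S. rational_ineq s) \<longrightarrow> (\<forall>v\<in>X. x v \<in> \<rat>)))
    \<or> (\<exists>b<0. ((\<lambda>_. 0), b) \<in> ineq_cone S)"
  using assms
proof (induction X arbitrary: S rule: finite_induct)
  case empty
  show ?case
  proof (cases "\<forall>s\<in>S. satisfies {} x s")
    case False
    then show ?thesis
      using certificate_without_variables empty.prems by blast
  qed blast
next
  case (insert v X)
  let ?S' = "eliminate v S"
  have "finite ?S'" "\<forall>s\<in>?S'. \<forall>u. u \<notin> X \<longrightarrow> fst s u = 0"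
    using insert.prems by (simp_all add: finite_eliminate eliminate_vanishing)
  from insert.IH[OF this] consider
      x where "\<forall>s\<in>?S'. satisfies X x s" "(\<forall>s\<in>?S'. rational_ineq s) \<longrightarrow> (\<forall>u\<in>X. x u \<in> \<rat>)"
    | b where "b < 0" "((\<lambda>_. 0), b) \<in> ineq_cone ?S'"
    by blast
  then show ?case
  proof cases
    case (1 x)
    obtain c where c: "\<forall>s\<in>S. satisfies (insert v X) (x(v := c)) s"
      and c_rat: "\<forall>u\<in>X. x u \<in> \<rat> \<Longrightarrow> \<forall>s\<in>S. rational_ineq s \<Longrightarrow> c \<in> \<rat>"
      using extend_solution[OF insert.hyps(1,2) insert.prems(1) 1(1)] by blast
    have "\<forall>u\<in>insert v X. (x(v := c)) u \<in> \<rat>" if "\<forall>s\<in>S. rational_ineq s"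
    proof -
      have x_rat: "\<forall>u\<in>X. x u \<in> \<rat>"
        using 1(2) rational_eliminate[OF that] by blast
      then show ?thesis
        using c_rat[OF x_rat that] by simp
    qed
    then show ?thesis
      using c by (intro disjI1 exI[of _ "x(v := c)"]) (simp del: fun_upd_apply)
  next
    case (2 b)
    then show ?thesis
      using ineq_cone_trans[OF eliminate_subset_ineq_cone[OF insert.prems(1)]] by blast
  qed
qed

text \<open>A multiplier on an inequality occurring for several indices is shared equally among them.\<close>

lemma ineq_cone_image:
  assumes "finite K" "c \<in> ineq_cone (R ` K)"
  obtains l where "\<forall>k\<in>K. 0 \<le> l k"
    "c = ((\<lambda>v. \<Sum>k\<in>K. l k * fst (R k) v), (\<Sum>k\<in>K. l k * snd (R k)))"
proof -
  obtain m where m: "\<forall>s\<in>R ` K. 0 \<le> m s" "c = ineq_comb m (R ` K)"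
    using assms(2) unfolding ineq_cone_def by blast
  define fiber where "fiber s = {k\<in>K. R k = s}" for s
  define l where "l k = m (R k) / card (fiber (R k))" for k
  have reindex: "(\<Sum>k\<in>K. l k * F (R k)) = (\<Sum>s\<in>R ` K. m s * F s)" for F :: "_ \<Rightarrow> real"
  proof -
    have "(\<Sum>k\<in>K. l k * F (R k)) = (\<Sum>s\<in>R ` K. \<Sum>k\<in>fiber s. l k * F (R k))"
      unfolding fiber_def using assms(1) by (rule sum.image_gen)
    also have "\<dots> = (\<Sum>s\<in>R ` K. m s * F s)"
    proof (rule sum.cong[OF refl])
      fix s assume "s \<in> R ` K"
      then have "card (fiber s) > 0"
        using assms(1) by (auto simp: fiber_def card_gt_0_iff)
      moreover have "(\<Sum>k\<in>fiber s. l k * F (R k)) = (\<Sum>k\<in>fiber s. m s / card (fiber s) * F s)"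
        by (intro sum.cong) (auto simp: fiber_def l_def)
      ultimately show "(\<Sum>k\<in>fiber s. l k * F (R k)) = m s * F s"
        by simp
    qed
    finally show ?thesis .
  qed
  have "\<forall>k\<in>K. 0 \<le> l k"
    using m(1) by (simp add: l_def)
  moreover have "c = ((\<lambda>v. \<Sum>k\<in>K. l k * fst (R k) v), (\<Sum>k\<in>K. l k * snd (R k)))"
    unfolding m(2) ineq_comb_def reindex[symmetric] by simp
  ultimately show ?thesis
    using that by blast
qed

section \<open>Duality for the fractional cover program\<close>

definition weight :: "('n::finite \<Rightarrow> real) \<Rightarrow> ('n \<Rightarrow>\<^sub>0 nat) \<Rightarrow> real" where
  "weight w b = (\<Sum>i\<in>UNIV. w i * real (Poly_Mapping.lookup b i))"

definition lp_feasible ::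
  "('n \<Rightarrow>\<^sub>0 nat) set \<Rightarrow> ('n \<Rightarrow>\<^sub>0 nat) \<Rightarrow> (('n \<Rightarrow>\<^sub>0 nat) \<Rightarrow> real) \<Rightarrow> bool"
where
  "lp_feasible G a y \<longleftrightarrow> (\<forall>g\<in>G. y g \<ge> 0) \<and>
     (\<forall>i. (\<Sum>g\<in>G. real (Poly_Mapping.lookup g i) * y g) \<le> real (Poly_Mapping.lookup a i))"

definition dual_feasible :: "('n \<Rightarrow>\<^sub>0 nat) set \<Rightarrow> ('n::finite \<Rightarrow> real) \<Rightarrow> bool" where
  "dual_feasible G w \<longleftrightarrow> (\<forall>i. 0 \<le> w i) \<and> (\<forall>g\<in>G. 1 \<le> weight w g)"

lemma lp_weak_duality:
  assumes "lp_feasible G a y" "dual_feasible G w"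
  shows "(\<Sum>g\<in>G. y g) \<le> weight w a"
proof -
  have "(\<Sum>g\<in>G. y g) \<le> (\<Sum>g\<in>G. y g * weight w g)"
  proof (rule sum_mono)
    fix g assume "g \<in> G"
    then have "y g * 1 \<le> y g * weight w g"
      using assms by (intro mult_left_mono) (auto simp: lp_feasible_def dual_feasible_def)
    then show "y g \<le> y g * weight w g"
      by simp
  qed
  also have "\<dots> = (\<Sum>i\<in>UNIV. w i * (\<Sum>g\<in>G. real (Poly_Mapping.lookup g i) * y g))"
    by (simp add: weight_def sum_distrib_left sum.swap[of _ G] algebra_simps)
  also have "\<dots> \<le> weight w a"
    using assms unfolding weight_def lp_feasible_def dual_feasible_def
    by (intro sum_mono mult_left_mono) auto
  finally show ?thesis .
qed

definition lp_index :: "('n \<Rightarrow>\<^sub>0 nat) set \<Rightarrow> (('n \<Rightarrow>\<^sub>0 nat) + 'n) option set" where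
  "lp_index G = insert None (Some ` (Inl ` G \<union> Inr ` UNIV))"

definition lp_ineq ::
  "('n \<Rightarrow>\<^sub>0 nat) set \<Rightarrow> ('n \<Rightarrow>\<^sub>0 nat) \<Rightarrow> real \<Rightarrow> (('n \<Rightarrow>\<^sub>0 nat) + 'n) option \<Rightarrow> ('n \<Rightarrow>\<^sub>0 nat) ineq"
where
  "lp_ineq G a u k = (case k of
      Some (Inl g) \<Rightarrow> ((\<lambda>h. if h = g then -1 else 0), 0)
    | Some (Inr i) \<Rightarrow>
        ((\<lambda>h. if h \<in> G then real (Poly_Mapping.lookup h i) else 0), real (Poly_Mapping.lookup a i))
    | None \<Rightarrow> ((\<lambda>h. if h \<in> G then -1 else 0), - u))"

lemma finite_lp_index: "finite G \<Longrightarrow> finite (lp_index (G :: ('n::finite \<Rightarrow>\<^sub>0 nat) set))"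
  by (simp add: lp_index_def)

lemma sum_lp_index:
  fixes G :: "('n::finite \<Rightarrow>\<^sub>0 nat) set"
  assumes "finite G"
  shows "(\<Sum>k\<in>lp_index G. F k) = (\<Sum>g\<in>G. F (Some (Inl g))) + (\<Sum>i\<in>UNIV. F (Some (Inr i))) + F None"
proof -
  have "(\<Sum>k\<in>lp_index G. F k) = F None + (\<Sum>k\<in>Inl ` G \<union> Inr ` UNIV. F (Some k))"
    using assms by (simp add: lp_index_def sum.reindex)
  also have "\<dots> = F None + ((\<Sum>k\<in>Inl ` G. F (Some k)) + (\<Sum>k\<in>Inr ` UNIV. F (Some k)))"
    using assms by (subst sum.union_disjoint) auto
  finally show ?thesis
    by (simp add: sum.reindex add_ac)
qed

lemma ball_lp_index:
  "(\<forall>k\<in>lp_index G. P k) \<longleftrightarrow> (\<forall>g\<in>G. P (Some (Inl g))) \<and> (\<forall>i. P (Some (Inr i))) \<and> P None"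
  by (auto simp: lp_index_def)

lemma slack_lp_ineq:
  shows "finite G \<Longrightarrow> g \<in> G \<Longrightarrow> slack G y (lp_ineq G a u (Some (Inl g))) = y g"
    and "slack G y (lp_ineq G a u (Some (Inr i))) =
      real (Poly_Mapping.lookup a i) - (\<Sum>h\<in>G. real (Poly_Mapping.lookup h i) * y h)"
    and "slack G y (lp_ineq G a u None) = (\<Sum>h\<in>G. y h) - u"
  by (simp_all add: slack_def lp_ineq_def if_distrib[of "\<lambda>c. c * _"] sum_negf cong: if_cong)

lemma satisfies_lp_ineq_iff:
  fixes G :: "('n::finite \<Rightarrow>\<^sub>0 nat) set"
  assumes "finite G"
  shows "(\<forall>k\<in>lp_index G. satisfies G y (lp_ineq G a u k)) \<longleftrightarrow>
    lp_feasible G a y \<and> u \<le> (\<Sum>g\<in>G. y g)"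
  using assms by (auto simp: ball_lp_index satisfies_def slack_lp_ineq lp_feasible_def)

lemma rational_lp_ineq: "u \<in> \<rat> \<Longrightarrow> rational_ineq (lp_ineq G a u k)"
  by (auto simp: rational_ineq_def lp_ineq_def split: option.split sum.split)

lemma lp_ineq_vanishing: "k \<in> lp_index G \<Longrightarrow> h \<notin> G \<Longrightarrow> fst (lp_ineq G a u k) h = 0"
  by (auto simp: lp_index_def lp_ineq_def)

text \<open>The multiplier of the objective inequality is positive, so the multipliers of the
  rows can be rescaled to a dual feasible weight.\<close>

lemma lp_certificate_dual:
  fixes G :: "('n::finite \<Rightarrow>\<^sub>0 nat) set"
  assumes "finite G" and nonneg: "\<forall>k\<in>lp_index G. 0 \<le> l k"
    and coeffs: "\<forall>h. (\<Sum>k\<in>lp_index G. l k * fst (lp_ineq G a u k) h) = 0"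
    and const: "(\<Sum>k\<in>lp_index G. l k * snd (lp_ineq G a u k)) < 0"
  obtains w where "dual_feasible G w" "weight w a < u"
proof -
  define z where "z i = l (Some (Inr i))" for i
  define L where "L = l None"
  have z_nonneg: "0 \<le> z i" for i
    using nonneg by (simp add: z_def lp_index_def)
  have "0 \<le> L"
    using nonneg by (simp add: L_def lp_index_def)
  have row: "weight z g = L + l (Some (Inl g))" if "g \<in> G" for g
  proof -
    have "(\<Sum>h\<in>G. l (Some (Inl h)) * (if g = h then -1 else 0)) = - l (Some (Inl g))"
      using assms(1) that by (simp add: if_distrib[of "\<lambda>c. _ * c"] cong: if_cong)
    then show ?thesis
      using coeffs[rule_format, of g] that
      by (simp add: sum_lp_index[OF assms(1)] lp_ineq_def weight_def z_def L_def mult.commute)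
  qed
  have bound: "weight z a < L * u"
    using const by (simp add: sum_lp_index[OF assms(1)] lp_ineq_def weight_def z_def L_def)
  have "0 < L"
  proof (rule ccontr)
    assume "\<not> 0 < L"
    then have "weight z a < 0"
      using bound \<open>0 \<le> L\<close> by simp
    moreover have "0 \<le> weight z a"
      using z_nonneg by (simp add: weight_def sum_nonneg)
    ultimately show False
      by simp
  qed
  define w where "w i = z i / L" for i
  have weight_w: "weight w b = weight z b / L" for b
    by (simp add: weight_def w_def sum_divide_distrib)
  have "dual_feasible G w"
    unfolding dual_feasible_def weight_w
    using \<open>0 < L\<close> z_nonneg nonneg row by (auto simp: w_def lp_index_def)
  moreover have "weight w a < u"
    using bound \<open>0 < L\<close> by (simp add: weight_w divide_less_eq mult.commute)
  ultimately show ?thesis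
    using that by blast
qed

theorem lp_alternative:
  fixes G :: "('n::finite \<Rightarrow>\<^sub>0 nat) set"
  assumes "finite G" "u \<in> \<rat>"
  obtains (primal) y where "lp_feasible G a y" "u \<le> (\<Sum>g\<in>G. y g)" "\<forall>g\<in>G. y g \<in> \<rat>"
  | (dual) w where "dual_feasible G w" "weight w a < u"
proof -
  let ?S = "lp_ineq G a u ` lp_index G"
  have fin: "finite ?S"
    using assms(1) by (simp add: finite_lp_index)
  have vanishing: "\<forall>s\<in>?S. \<forall>h. h \<notin> G \<longrightarrow> fst s h = 0"
    using lp_ineq_vanishing by blast
  have rational: "\<forall>s\<in>?S. rational_ineq s"
    using rational_lp_ineq[OF assms(2)] by blast
  consider
      y where "\<forall>s\<in>?S. satisfies G y s" "\<forall>g\<in>G. y g \<in> \<rat>"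
    | b where "b < 0" "((\<lambda>_. 0), b) \<in> ineq_cone ?S"
    using farkas_alternative[OF assms(1) fin vanishing] rational by blast
  then show ?thesis
  proof cases
    case (1 y)
    then have "\<forall>k\<in>lp_index G. satisfies G y (lp_ineq G a u k)"
      by blast
    then have "lp_feasible G a y" "u \<le> (\<Sum>g\<in>G. y g)"
      by (simp_all add: satisfies_lp_ineq_iff[OF assms(1)])
    then show ?thesis
      using primal 1(2) by blast
  next
    case (2 b)
    obtain l where nonneg: "\<forall>k\<in>lp_index G. 0 \<le> l k"
      and l: "((\<lambda>_. 0), b) = ((\<lambda>h. \<Sum>k\<in>lp_index G. l k * fst (lp_ineq G a u k) h),
          (\<Sum>k\<in>lp_index G. l k * snd (lp_ineq G a u k)))"
      by (rule ineq_cone_image[OF finite_lp_index[OF assms(1)] 2(2)])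
    have coeffs: "\<forall>h. (\<Sum>k\<in>lp_index G. l k * fst (lp_ineq G a u k) h) = 0"
      using l by (simp add: fun_eq_iff)
    have const: "(\<Sum>k\<in>lp_index G. l k * snd (lp_ineq G a u k)) < 0"
      using l 2(1) by simp
    show ?thesis
      by (rule lp_certificate_dual[OF assms(1) nonneg coeffs const]) (rule dual)
  qed
qed

section \<open>Monomials and monomial ideals\<close>

lemma monom_x_add: "monom_x (a + b) = (monom_x a * monom_x b :: ('n \<Rightarrow>\<^sub>0 nat) \<Rightarrow>\<^sub>0 'k::comm_ring_1)"
  by (simp add: monom_x_def mult_single)

lemma monom_x_power:
  "(monom_x a :: ('n \<Rightarrow>\<^sub>0 nat) \<Rightarrow>\<^sub>0 'k::comm_ring_1) ^ n = monom_x (\<Sum>j<n. a)"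
  by (induction n) (simp_all add: monom_x_def mult_single add.commute)

lemma lookup_sum_const:
  "Poly_Mapping.lookup (\<Sum>j<n. a :: 'n \<Rightarrow>\<^sub>0 nat) i = n * Poly_Mapping.lookup a i"
  by (induction n) (simp_all add: lookup_add)

lemma keys_monom_x: "Poly_Mapping.keys (monom_x a :: ('n \<Rightarrow>\<^sub>0 nat) \<Rightarrow>\<^sub>0 'k::comm_ring_1) = {a}"
  by (simp add: monom_x_def)

lemma le_lookup_add_diff:
  fixes b c :: "'n \<Rightarrow>\<^sub>0 nat"
  assumes "Poly_Mapping.lookup b \<le> Poly_Mapping.lookup c"
  shows "c = b + (c - b)"
proof (rule poly_mapping_eqI)
  fix i
  have "Poly_Mapping.lookup b i \<le> Poly_Mapping.lookup c i"
    using assms by (simp add: le_fun_def)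
  then show "Poly_Mapping.lookup c i = Poly_Mapping.lookup (b + (c - b)) i"
    by (simp add: lookup_add lookup_minus)
qed

lemma monom_x_upward_closed:
  assumes "\<And>r x. x \<in> J \<Longrightarrow> r * x \<in> J" "monom_x b \<in> J"
    "Poly_Mapping.lookup b \<le> Poly_Mapping.lookup c"
  shows "(monom_x c :: ('n \<Rightarrow>\<^sub>0 nat) \<Rightarrow>\<^sub>0 'k::comm_ring_1) \<in> J"
proof -
  have "monom_x c = monom_x (c - b) * (monom_x b :: ('n \<Rightarrow>\<^sub>0 nat) \<Rightarrow>\<^sub>0 'k)"
    using le_lookup_add_diff[OF assms(3)] by (metis add.commute monom_x_add)
  then show ?thesis
    using assms(1,2) by simp
qed

lemma ideal_gen_least: "is_ideal J \<Longrightarrow> S \<subseteq> J \<Longrightarrow> ideal_gen S \<subseteq> J"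
  unfolding ideal_gen_def by blast

lemma subset_ideal_gen: "S \<subseteq> ideal_gen S"
  unfolding ideal_gen_def by blast

lemma ideal_gen_mult: "x \<in> ideal_gen S \<Longrightarrow> r * x \<in> ideal_gen S"
  unfolding ideal_gen_def is_ideal_def by blast

lemma zero_in_ideal_pow: "0 \<in> ideal_pow J i"
  by (cases i) (auto simp: ideal_gen_def is_ideal_def)

lemma ideal_pow_mult: "x \<in> ideal_pow J i \<Longrightarrow> r * x \<in> ideal_pow J i"
  by (cases i) (auto simp: ideal_gen_mult)

lemma ideal_pow_SucI: "x \<in> J \<Longrightarrow> y \<in> ideal_pow J n \<Longrightarrow> x * y \<in> ideal_pow J (Suc n)"
  using subset_ideal_gen by fastforce

lemma keys_ideal_gen_monom_x:
  fixes S :: "('n \<Rightarrow>\<^sub>0 nat) set"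
  assumes "f \<in> ideal_gen (monom_x ` S :: (('n \<Rightarrow>\<^sub>0 nat) \<Rightarrow>\<^sub>0 'k::comm_ring_1) set)"
    "b \<in> Poly_Mapping.keys f"
  shows "\<exists>s\<in>S. Poly_Mapping.lookup s \<le> Poly_Mapping.lookup b"
proof -
  define U :: "(('n \<Rightarrow>\<^sub>0 nat) \<Rightarrow>\<^sub>0 'k) set"
    where "U = {f. \<forall>b\<in>Poly_Mapping.keys f. \<exists>s\<in>S. Poly_Mapping.lookup s \<le> Poly_Mapping.lookup b}"
  have "is_ideal U"
    unfolding is_ideal_def
  proof (intro conjI ballI allI impI)
    show "0 \<in> U"
      by (simp add: U_def)
  next
    fix x y assume "x \<in> U" "y \<in> U"
    then show "x + y \<in> U"
      using keys_add[of x y] by (auto simp: U_def)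
  next
    fix r x assume x: "x \<in> U"
    show "r * x \<in> U"
      unfolding U_def
    proof (intro CollectI ballI)
      fix b assume "b \<in> Poly_Mapping.keys (r * x)"
      then obtain c d where "b = c + d" "d \<in> Poly_Mapping.keys x"
        using keys_mult by blast
      moreover obtain s where "s \<in> S" "Poly_Mapping.lookup s \<le> Poly_Mapping.lookup d"
        using x calculation(2) by (auto simp: U_def)
      ultimately show "\<exists>s\<in>S. Poly_Mapping.lookup s \<le> Poly_Mapping.lookup b"
        by (auto simp: le_fun_def lookup_add intro: le_add2[THEN order_trans[rotated]])
    qed
  qed
  moreover have "monom_x ` S \<subseteq> U"
    by (auto simp: U_def keys_monom_x)
  ultimately have "f \<in> U"
    using assms(1) ideal_gen_least by blast
  then show ?thesis
    using assms(2) by (simp add: U_def)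
qed

lemma exists_min_gen_below:
  fixes I :: "(('n::finite \<Rightarrow>\<^sub>0 nat) \<Rightarrow>\<^sub>0 'k::comm_ring_1) set"
  shows "monom_x b \<in> I \<Longrightarrow> \<exists>g\<in>min_gens I. Poly_Mapping.lookup g \<le> Poly_Mapping.lookup b"
proof (induction b rule: measure_induct_rule[where f = "\<lambda>b. \<Sum>i\<in>UNIV. Poly_Mapping.lookup b i"])
  case (less b)
  show ?case
  proof (cases "b \<in> min_gens I")
    case False
    then obtain b' where b': "monom_x b' \<in> I" "Poly_Mapping.lookup b' \<le> Poly_Mapping.lookup b" "b' \<noteq> b"
      using less.prems unfolding min_gens_def le_fun_def by blast
    then obtain i where "Poly_Mapping.lookup b' i < Poly_Mapping.lookup b i"
      by (metis le_fun_def order.not_eq_order_implies_strict poly_mapping_eqI)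
    then have "(\<Sum>i\<in>UNIV. Poly_Mapping.lookup b' i) < (\<Sum>i\<in>UNIV. Poly_Mapping.lookup b i)"
      using b'(2) by (intro sum_strict_mono_ex1) (auto simp: le_fun_def)
    then show ?thesis
      using less.IH b' by (meson order_trans)
  qed auto
qed

lemma antichain_cover:
  fixes A :: "('a \<Rightarrow> nat) set"
  assumes "\<forall>x\<in>A. \<forall>i. i \<notin> D \<longrightarrow> x i = 0" "\<forall>x\<in>A. \<forall>y\<in>A. x \<le> y \<longrightarrow> x = y" "x0 \<in> A"
  shows "A \<subseteq> insert x0 (\<Union>i\<in>D. \<Union>v<x0 i. {y\<in>A. y i = v})"
proof
  fix y assume y: "y \<in> A"
  show "y \<in> insert x0 (\<Union>i\<in>D. \<Union>v<x0 i. {y\<in>A. y i = v})"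
  proof (cases "y = x0")
    case False
    then have "\<not> x0 \<le> y"
      using assms(2,3) y by blast
    then obtain i where "y i < x0 i"
      by (auto simp: le_fun_def not_le)
    moreover from this have "i \<in> D"
      using assms(1,3) by force
    ultimately show ?thesis
      using y by auto
  qed simp
qed

lemma antichain_level_set:
  fixes A :: "('a \<Rightarrow> nat) set" and i :: 'a and v :: nat
  defines "B \<equiv> {y\<in>A. y i = v}"
  assumes "\<forall>x\<in>A. \<forall>j. j \<notin> D \<longrightarrow> x j = 0" "\<forall>x\<in>A. \<forall>y\<in>A. x \<le> y \<longrightarrow> x = y"
  shows "inj_on (\<lambda>y. y(i := 0)) B"
    and "\<forall>x\<in>(\<lambda>y. y(i := 0)) ` B. \<forall>j. j \<notin> D - {i} \<longrightarrow> x j = 0"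
    and "\<forall>x\<in>(\<lambda>y. y(i := 0)) ` B. \<forall>y\<in>(\<lambda>y. y(i := 0)) ` B. x \<le> y \<longrightarrow> x = y"
proof -
  show "inj_on (\<lambda>y. y(i := 0)) B"
  proof (rule inj_onI)
    fix y y' assume "y \<in> B" "y' \<in> B" "y(i := 0) = y'(i := 0)"
    then show "y = y'"
      by (simp add: B_def fun_eq_iff) (metis)
  qed
  show "\<forall>x\<in>(\<lambda>y. y(i := 0)) ` B. \<forall>j. j \<notin> D - {i} \<longrightarrow> x j = 0"
    using assms(2) by (auto simp: B_def)
  show "\<forall>x\<in>(\<lambda>y. y(i := 0)) ` B. \<forall>y\<in>(\<lambda>y. y(i := 0)) ` B. x \<le> y \<longrightarrow> x = y"
  proof clarify
    fix y y' assume yy: "y \<in> B" "y' \<in> B" "y(i := 0) \<le> y'(i := 0)"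
    have "y j \<le> y' j" for j
      using yy le_funD[OF yy(3), of j] by (cases "j = i") (simp_all add: B_def)
    then have "y = y'"
      using assms(3) yy(1,2) by (simp add: B_def le_fun_def)
    then show "y(i := 0) = y'(i := 0)"
      by simp
  qed
qed

lemma finite_antichain:
  fixes A :: "('a \<Rightarrow> nat) set"
  assumes "finite D" "\<forall>x\<in>A. \<forall>i. i \<notin> D \<longrightarrow> x i = 0" "\<forall>x\<in>A. \<forall>y\<in>A. x \<le> y \<longrightarrow> x = y"
  shows "finite A"
  using assms
proof (induction "card D" arbitrary: D A rule: less_induct)
  case less
  show ?case
  proof (cases "A = {}")
    case False
    then obtain x0 where x0: "x0 \<in> A"
      by blast
    have "finite {y\<in>A. y i = v}" if "i \<in> D" for i v
    proof -
      note level = antichain_level_set[OF less.prems(2,3), of i v]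
      have "card (D - {i}) < card D"
        using less.prems(1) that by (rule card_Diff1_less)
      then have "finite ((\<lambda>y. y(i := 0)) ` {y\<in>A. y i = v})"
        using less.prems(1) by (intro less.hyps[OF _ _ level(2,3)]) simp_all
      then show ?thesis
        using level(1) finite_imageD by blast
    qed
    then show ?thesis
      using antichain_cover[OF less.prems(2,3) x0] less.prems(1) by (simp add: finite_subset)
  qed simp
qed

lemma finite_min_gens:
  fixes I :: "(('n::finite \<Rightarrow>\<^sub>0 nat) \<Rightarrow>\<^sub>0 'k::comm_ring_1) set"
  shows "finite (min_gens I)"
proof -
  have "finite (Poly_Mapping.lookup ` min_gens I)"
    by (rule finite_antichain[of UNIV]) (auto simp: min_gens_def le_fun_def)
  moreover have "inj_on Poly_Mapping.lookup (min_gens I)"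
    by (auto intro: inj_onI)
  ultimately show ?thesis
    using finite_imageD by blast
qed

section \<open>Monomial valuations\<close>

lemma weight_add: "weight w (b + c) = weight w b + weight w c"
  by (simp add: weight_def lookup_add algebra_simps sum.distrib)

lemma weight_nonneg: "\<forall>i. 0 \<le> w i \<Longrightarrow> 0 \<le> weight w b"
  by (simp add: weight_def sum_nonneg)

lemma weight_mono:
  "\<forall>i. 0 \<le> w i \<Longrightarrow> Poly_Mapping.lookup b \<le> Poly_Mapping.lookup c \<Longrightarrow> weight w b \<le> weight w c"
  unfolding weight_def le_fun_def by (intro sum_mono mult_left_mono) auto

lemma weight_sum_const: "weight w (\<Sum>j<n. b) = real n * weight w b"
  by (simp add: weight_def lookup_sum_const sum_distrib_left algebra_simps)

definition weight_ge :: "('n::finite \<Rightarrow> real) \<Rightarrow> real \<Rightarrow> (('n \<Rightarrow>\<^sub>0 nat) \<Rightarrow>\<^sub>0 'k::comm_ring_1) set" where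
  "weight_ge w t = {f. \<forall>b\<in>Poly_Mapping.keys f. t \<le> weight w b}"

lemma monom_x_in_weight_ge: "monom_x b \<in> weight_ge w (weight w b)"
  by (simp add: weight_ge_def keys_monom_x)

lemma weight_ge_mult:
  assumes "x \<in> weight_ge w s" "y \<in> weight_ge w t"
  shows "x * y \<in> weight_ge w (s + t)"
  unfolding weight_ge_def
proof (intro CollectI ballI)
  fix b assume "b \<in> Poly_Mapping.keys (x * y)"
  then obtain c d where "b = c + d" "c \<in> Poly_Mapping.keys x" "d \<in> Poly_Mapping.keys y"
    using keys_mult by blast
  then show "s + t \<le> weight w b"
    using assms by (auto simp: weight_ge_def weight_add intro: add_mono)
qed

lemma is_ideal_weight_ge:
  assumes "\<forall>i. 0 \<le> w i"
  shows "is_ideal (weight_ge w t :: (('n::finite \<Rightarrow>\<^sub>0 nat) \<Rightarrow>\<^sub>0 'k::comm_ring_1) set)"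
  unfolding is_ideal_def
proof (intro conjI ballI allI impI)
  show "0 \<in> weight_ge w t"
    by (simp add: weight_ge_def)
next
  fix x y :: "('n \<Rightarrow>\<^sub>0 nat) \<Rightarrow>\<^sub>0 'k" assume "x \<in> weight_ge w t" "y \<in> weight_ge w t"
  then show "x + y \<in> weight_ge w t"
    using keys_add[of x y] by (auto simp: weight_ge_def)
next
  fix r x :: "('n \<Rightarrow>\<^sub>0 nat) \<Rightarrow>\<^sub>0 'k" assume "x \<in> weight_ge w t"
  moreover have "r \<in> weight_ge w 0"
    using weight_nonneg[OF assms] by (simp add: weight_ge_def)
  ultimately show "r * x \<in> weight_ge w t"
    using weight_ge_mult[of r w 0 x t] by simp
qed

lemma ideal_pow_subset_weight_ge:
  assumes "\<forall>i. 0 \<le> w i" "J \<subseteq> weight_ge w t"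
  shows "ideal_pow J i \<subseteq> weight_ge w (real i * t)"
proof (induction i)
  case 0
  show ?case
    using weight_nonneg[OF assms(1)] by (auto simp: weight_ge_def)
next
  case (Suc i)
  have "x * y \<in> weight_ge w (real (Suc i) * t)" if "x \<in> J" "y \<in> ideal_pow J i" for x y
  proof -
    have "x * y \<in> weight_ge w (t + real i * t)"
      using weight_ge_mult that assms(2) Suc by blast
    then show ?thesis
      by (simp add: algebra_simps)
  qed
  then have "{x * y |x y. x \<in> J \<and> y \<in> ideal_pow J i} \<subseteq> weight_ge w (real (Suc i) * t)"
    by blast
  then show ?case
    unfolding ideal_pow.simps by (rule ideal_gen_least[OF is_ideal_weight_ge[OF assms(1)]])
qed

lemma monomial_ideal_subset_weight_ge:
  fixes I :: "(('n::finite \<Rightarrow>\<^sub>0 nat) \<Rightarrow>\<^sub>0 'k::comm_ring_1) set"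
  assumes "monomial_ideal I" "\<forall>i. 0 \<le> w i" "\<forall>g\<in>min_gens I. t \<le> weight w g"
  shows "I \<subseteq> weight_ge w t"
proof
  fix f assume f: "f \<in> I"
  obtain S where S: "I = ideal_gen (monom_x ` S)"
    using assms(1) monomial_ideal_def by blast
  show "f \<in> weight_ge w t"
    unfolding weight_ge_def
  proof (intro CollectI ballI)
    fix b assume "b \<in> Poly_Mapping.keys f"
    then obtain s where "s \<in> S" "Poly_Mapping.lookup s \<le> Poly_Mapping.lookup b"
      using keys_ideal_gen_monom_x f S by blast
    moreover have "monom_x s \<in> I"
      using \<open>s \<in> S\<close> subset_ideal_gen unfolding S by blast
    ultimately have "monom_x b \<in> I"
      unfolding S using monom_x_upward_closed ideal_gen_mult by blast
    then obtain g where "g \<in> min_gens I" "Poly_Mapping.lookup g \<le> Poly_Mapping.lookup b"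
      using exists_min_gen_below by blast
    then show "t \<le> weight w b"
      using assms(3) weight_mono[OF assms(2)] order_trans by blast
  qed
qed

lemma int_closure_monom_x_weight:
  fixes J :: "(('n::finite \<Rightarrow>\<^sub>0 nat) \<Rightarrow>\<^sub>0 'k::comm_ring_1) set"
  assumes "\<forall>i. 0 \<le> w i" "J \<subseteq> weight_ge w t" "monom_x b \<in> int_closure J"
  shows "t \<le> weight w b"
proof (rule ccontr)
  assume "\<not> t \<le> weight w b"
  obtain n c where n: "n \<ge> 1" "\<forall>i\<in>{1..n}. c i \<in> ideal_pow J i"
    and eq: "monom_x b ^ n + (\<Sum>i=1..n. c i * monom_x b ^ (n - i)) = 0"
    using assms(3) unfolding int_closure_def by blast
  define B where "B = (\<Sum>j<n. b)"
  \<comment> \<open>every term other than \<open>x^(n b)\<close> has weight \<open>> n w(b)\<close>, so it misses the monomial \<open>x^B\<close>\<close>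
  have "Poly_Mapping.lookup (c i * monom_x b ^ (n - i)) B = 0" if "i \<in> {1..n}" for i
  proof -
    have "c i \<in> weight_ge w (real i * t)"
      using ideal_pow_subset_weight_ge[OF assms(1,2)] n(2) that by blast
    moreover have "monom_x b ^ (n - i) \<in> weight_ge w (real (n - i) * weight w b)"
      using monom_x_in_weight_ge[of "\<Sum>j<n - i. b" w] by (simp add: monom_x_power weight_sum_const)
    ultimately have "c i * monom_x b ^ (n - i) \<in> weight_ge w (real i * t + real (n - i) * weight w b)"
      by (rule weight_ge_mult)
    moreover have "weight w B < real i * t + real (n - i) * weight w b"
      using that \<open>\<not> t \<le> weight w b\<close>
      by (simp add: B_def weight_sum_const of_nat_diff algebra_simps)
    ultimately have "B \<notin> Poly_Mapping.keys (c i * monom_x b ^ (n - i))"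
      unfolding weight_ge_def by force
    then show ?thesis
      by (simp add: in_keys_iff)
  qed
  then have "Poly_Mapping.lookup (\<Sum>i=1..n. c i * monom_x b ^ (n - i)) B = 0"
    by (simp add: lookup_sum)
  moreover have "Poly_Mapping.lookup (monom_x b ^ n) B = 1"
    unfolding monom_x_power B_def by (simp add: monom_x_def)
  ultimately have "Poly_Mapping.lookup (monom_x b ^ n + (\<Sum>i=1..n. c i * monom_x b ^ (n - i))) B = 1"
    by (simp add: lookup_add)
  then show False
    using eq by simp
qed

lemma rat_power_weight_bound:
  fixes I :: "(('n::finite \<Rightarrow>\<^sub>0 nat) \<Rightarrow>\<^sub>0 'k::comm_ring_1) set"
  assumes "monomial_ideal I" "dual_feasible (min_gens I) w" "monom_x a \<in> rat_power I p q"
  shows "real p \<le> real q * weight w a"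
proof -
  have w: "\<forall>i. 0 \<le> w i"
    using assms(2) by (simp add: dual_feasible_def)
  have "I \<subseteq> weight_ge w 1"
    using assms(1,2) w by (intro monomial_ideal_subset_weight_ge) (auto simp: dual_feasible_def)
  then have "ideal_pow I p \<subseteq> weight_ge w (real p)"
    using ideal_pow_subset_weight_ge[OF w] by (metis mult.right_neutral)
  moreover have "monom_x (\<Sum>j<q. a) \<in> int_closure (ideal_pow I p)"
    using assms(3) by (simp add: rat_power_def monom_x_power)
  ultimately have "real p \<le> weight w (\<Sum>j<q. a)"
    by (rule int_closure_monom_x_weight[OF w])
  then show ?thesis
    by (simp add: weight_sum_const)
qed

section \<open>Rational powers from rational fractional covers\<close>

lemma int_closure_if_power_in_ideal_pow:
  assumes "n \<ge> 1" "z ^ n \<in> ideal_pow J n"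
  shows "z \<in> int_closure J"
proof -
  define c where "c i = (if i = n then - (z ^ n) else 0)" for i
  have "\<forall>i\<in>{1..n}. c i \<in> ideal_pow J i"
    using assms(2) ideal_pow_mult[of "z ^ n" J n "- 1"] by (simp add: c_def zero_in_ideal_pow)
  moreover have "z ^ n + (\<Sum>i=1..n. c i * z ^ (n - i)) = 0"
    using assms(1) by (simp add: c_def if_distrib[of "\<lambda>x. x * _"] cong: if_cong)
  ultimately show ?thesis
    using assms(1) unfolding int_closure_def by blast
qed

lemma monom_x_sum_list_in_ideal_pow:
  "\<forall>g\<in>set L. monom_x g \<in> J \<Longrightarrow> monom_x (sum_list L) \<in> ideal_pow J (length L)"
  by (induction L) (auto simp: monom_x_add simp del: ideal_pow.simps(2) intro: ideal_pow_SucI)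

lemma monom_x_sum_list_in_ideal_pow_pow:
  "length L = p * D \<Longrightarrow> \<forall>g\<in>set L. monom_x g \<in> I \<Longrightarrow>
    monom_x (sum_list L) \<in> ideal_pow (ideal_pow I p) D"
proof (induction D arbitrary: L)
  case (Suc D)
  have "monom_x (sum_list (take p L)) \<in> ideal_pow I p"
    using monom_x_sum_list_in_ideal_pow[of "take p L" I] Suc.prems by (auto dest: in_set_takeD)
  moreover have "monom_x (sum_list (drop p L)) \<in> ideal_pow (ideal_pow I p) D"
    using Suc.IH[of "drop p L"] Suc.prems by (auto dest: in_set_dropD)
  moreover have "sum_list L = sum_list (take p L) + sum_list (drop p L)"
    by (metis append_take_drop_id sum_list_append)
  ultimately show ?case
    by (simp add: monom_x_add ideal_pow_SucI del: ideal_pow.simps)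
qed simp

lemma lookup_sum_list_replicate:
  "Poly_Mapping.lookup (sum_list (replicate k g) :: 'n \<Rightarrow>\<^sub>0 nat) i = k * Poly_Mapping.lookup g i"
  by (induction k) (simp_all add: lookup_add)

lemma exists_list_with_multiplicities:
  fixes G :: "('n \<Rightarrow>\<^sub>0 nat) set"
  assumes "finite G"
  shows "\<exists>L. set L \<subseteq> G \<and> length L = (\<Sum>g\<in>G. m g) \<and>
    (\<forall>i. Poly_Mapping.lookup (sum_list L) i = (\<Sum>g\<in>G. m g * Poly_Mapping.lookup g i))"
  using assms
proof (induction G rule: finite_induct)
  case (insert g G)
  then obtain L where "set L \<subseteq> G" "length L = (\<Sum>g\<in>G. m g)"
    "\<forall>i. Poly_Mapping.lookup (sum_list L) i = (\<Sum>g\<in>G. m g * Poly_Mapping.lookup g i)"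
    by blast
  with insert.hyps show ?case
    by (intro exI[of _ "replicate (m g) g @ L"])
      (auto simp: lookup_add lookup_sum_list_replicate)
qed simp

lemma lookup_sum_list_take_le:
  "Poly_Mapping.lookup (sum_list (take k L) :: 'n \<Rightarrow>\<^sub>0 nat) \<le> Poly_Mapping.lookup (sum_list L)"
proof -
  have "sum_list L = sum_list (take k L) + sum_list (drop k L)"
    by (metis append_take_drop_id sum_list_append)
  then show ?thesis
    by (metis le_add1 le_funI lookup_add)
qed

lemma common_denominator:
  assumes "finite G" "\<forall>g\<in>G. 0 \<le> y g \<and> y g \<in> \<rat>"
  shows "\<exists>D>0. \<exists>n. \<forall>g\<in>G. real (n g) = real D * y g"
  using assms
proof (induction G rule: finite_induct)
  case empty
  show ?case
    by (intro exI[of _ "1::nat"]) simp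
next
  case (insert g G)
  then obtain D n where D: "D > 0" "\<forall>h\<in>G. real (n h) = real D * y h"
    by auto
  obtain r s where rs: "s \<noteq> 0" "\<bar>y g\<bar> = real r / real s"
    using insert.prems Rats_abs_nat_div_natE by blast
  have "real (D * r) = real (D * s) * y g"
    using rs insert.prems by simp
  moreover have "real (s * n h) = real (D * s) * y h" if "h \<in> G" for h
    using D(2) that by simp
  ultimately show ?case
    using D(1) rs(1) by (intro exI[of _ "D * s"] conjI exI[of _ "(\<lambda>h. s * n h)(g := D * r)"]) auto
qed

lemma generator_list_of_rational_feasible:
  fixes G :: "('n::finite \<Rightarrow>\<^sub>0 nat) set"
  assumes "finite G" "lp_feasible G a y" "\<forall>g\<in>G. y g \<in> \<rat>"
    and objective: "real p \<le> real q * (\<Sum>g\<in>G. y g)"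
  obtains D L where "D > 0" "set L \<subseteq> G" "length L = p * D"
    "Poly_Mapping.lookup (sum_list L) \<le> Poly_Mapping.lookup (\<Sum>j<q * D. a)"
proof -
  have "\<forall>g\<in>G. 0 \<le> y g \<and> y g \<in> \<rat>"
    using assms(2,3) by (simp add: lp_feasible_def)
  then obtain D n where "D > 0" and n: "\<forall>g\<in>G. real (n g) = real D * y g"
    using common_denominator[OF assms(1)] by blast
  obtain L where L: "set L \<subseteq> G" "length L = (\<Sum>g\<in>G. q * n g)"
    "\<forall>i. Poly_Mapping.lookup (sum_list L) i = (\<Sum>g\<in>G. q * n g * Poly_Mapping.lookup g i)"
    using exists_list_with_multiplicities[OF assms(1), of "\<lambda>g. q * n g"] by blast
  have "real (length L) = real D * (real q * (\<Sum>g\<in>G. y g))"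
    using n by (simp add: L(2) sum_distrib_left algebra_simps)
  then have "p * D \<le> length L"
    using mult_left_mono[OF objective, of "real D"] by (simp add: mult.commute flip: of_nat_mult)
  then have length: "length (take (p * D) L) = p * D"
    by simp
  have set: "set (take (p * D) L) \<subseteq> G"
    by (rule order_trans[OF set_take_subset L(1)])
  have "Poly_Mapping.lookup (sum_list L) \<le> Poly_Mapping.lookup (\<Sum>j<q * D. a)"
  proof (rule le_funI)
    fix i
    have "real (Poly_Mapping.lookup (sum_list L) i)
        = real q * real D * (\<Sum>g\<in>G. real (Poly_Mapping.lookup g i) * y g)"
      using n by (simp add: L(3) sum_distrib_left algebra_simps)
    also have "\<dots> \<le> real q * real D * real (Poly_Mapping.lookup a i)"
      using assms(2) by (intro mult_left_mono) (auto simp: lp_feasible_def)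
    finally show "Poly_Mapping.lookup (sum_list L) i \<le> Poly_Mapping.lookup (\<Sum>j<q * D. a) i"
      by (simp add: lookup_sum_const flip: of_nat_mult)
  qed
  then have "Poly_Mapping.lookup (sum_list (take (p * D) L)) \<le> Poly_Mapping.lookup (\<Sum>j<q * D. a)"
    by (rule order_trans[OF lookup_sum_list_take_le])
  then show ?thesis
    by (rule that[OF \<open>D > 0\<close> set length])
qed

lemma rat_power_of_rational_feasible:
  fixes I :: "(('n::finite \<Rightarrow>\<^sub>0 nat) \<Rightarrow>\<^sub>0 'k::comm_ring_1) set"
  assumes "finite G" "\<forall>g\<in>G. monom_x g \<in> I" "lp_feasible G a y" "\<forall>g\<in>G. y g \<in> \<rat>"
    "real p \<le> real q * (\<Sum>g\<in>G. y g)"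
  shows "monom_x a \<in> rat_power I p q"
proof -
  obtain D L where "D > 0" "set L \<subseteq> G" "length L = p * D"
    and below: "Poly_Mapping.lookup (sum_list L) \<le> Poly_Mapping.lookup (\<Sum>j<q * D. a)"
    using generator_list_of_rational_feasible[OF assms(1,3-5)] by blast
  then have "monom_x (sum_list L) \<in> ideal_pow (ideal_pow I p) D"
    using assms(2) by (intro monom_x_sum_list_in_ideal_pow_pow) auto
  then have "monom_x (\<Sum>j<q * D. a) \<in> ideal_pow (ideal_pow I p) D"
    using below monom_x_upward_closed[of "ideal_pow (ideal_pow I p) D"] ideal_pow_mult by blast
  then have "(monom_x a ^ q) ^ D \<in> ideal_pow (ideal_pow I p) D"
    by (subst power_mult[symmetric]) (simp only: monom_x_power)
  then have "monom_x a ^ q \<in> int_closure (ideal_pow I p)"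
    using \<open>D > 0\<close> by (intro int_closure_if_power_in_ideal_pow[of D]) simp_all
  then show ?thesis
    by (simp add: rat_power_def)
qed

lemma nu_star_ge_feasible:
  "lp_feasible (min_gens I) a y \<Longrightarrow> ereal (\<Sum>g\<in>min_gens I. y g) \<le> nu_star a I"
  unfolding nu_star_def by (rule SUP_upper) (simp add: lp_feasible_def)

lemma nu_star_le_dual_feasible:
  "dual_feasible (min_gens I) w \<Longrightarrow> nu_star a I \<le> ereal (weight w a)"
  unfolding nu_star_def using lp_weak_duality by (intro SUP_least) (simp add: lp_feasible_def)

lemma nu_star_ge_if_in_rat_power:
  fixes I :: "(('n::finite \<Rightarrow>\<^sub>0 nat) \<Rightarrow>\<^sub>0 'k::comm_ring_1) set"
  assumes "monomial_ideal I" "q \<noteq> 0" "monom_x a \<in> rat_power I p q"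
  shows "ereal (real p / real q) \<le> nu_star a I"
proof -
  have "real p / real q \<in> \<rat>"
    by simp
  then show ?thesis
  proof (rule lp_alternative[OF finite_min_gens])
    fix y assume "lp_feasible (min_gens I) a y" "real p / real q \<le> (\<Sum>g\<in>min_gens I. y g)"
    then show ?thesis
      using nu_star_ge_feasible order_trans by (metis ereal_less_eq(3))
  next
    fix w assume w: "dual_feasible (min_gens I) w" "weight w a < real p / real q"
    then have False
      using rat_power_weight_bound[OF assms(1) w(1) assms(3)] assms(2)
      by (simp add: less_divide_eq mult.commute)
    then show ?thesis ..
  qed
qed

lemma in_rat_power_if_nu_star_ge:
  fixes I :: "(('n::finite \<Rightarrow>\<^sub>0 nat) \<Rightarrow>\<^sub>0 'k::comm_ring_1) set"
  assumes "q \<noteq> 0" "ereal (real p / real q) \<le> nu_star a I"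
  shows "monom_x a \<in> rat_power I p q"
proof -
  have "real p / real q \<in> \<rat>"
    by simp
  then show ?thesis
  proof (rule lp_alternative[OF finite_min_gens])
    fix y assume y: "lp_feasible (min_gens I) a y" "real p / real q \<le> (\<Sum>g\<in>min_gens I. y g)"
      "\<forall>g\<in>min_gens I. y g \<in> \<rat>"
    have "\<forall>g\<in>min_gens I. monom_x g \<in> I"
      by (simp add: min_gens_def)
    then show ?thesis
      using finite_min_gens y assms(1)
      by (intro rat_power_of_rational_feasible) (auto simp: divide_le_eq mult.commute)
  next
    fix w assume "dual_feasible (min_gens I) w" "weight w a < real p / real q"
    moreover from this have "ereal (real p / real q) \<le> ereal (weight w a)"
      using assms(2) nu_star_le_dual_feasible order_trans by blast
    ultimately show ?thesis
      by simp
  qed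
qed

theorem lemma2p1:
  fixes I :: "(('n::finite \<Rightarrow>\<^sub>0 nat) \<Rightarrow>\<^sub>0 'k::field) set"
    and a :: "'n \<Rightarrow>\<^sub>0 nat" and p q :: nat
  assumes "is_ideal I" and "monomial_ideal I" and "q \<noteq> 0"
  shows "monom_x a \<in> rat_power I p q \<longleftrightarrow> nu_star a I \<ge> ereal (real p / real q)"
  using nu_star_ge_if_in_rat_power[OF assms(2,3)] in_rat_power_if_nu_star_ge[OF assms(3)] by blast

end
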